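(* Let $n\ge2$, let $\mathcal{P}$ be a distribution on $\mathcal{Z}$, let $\mathcal{A}:\mathcal{Z}^{n-1}\to\mathcal{W}\subseteq\mathbb{R}^K$ be a deterministic algorithm and let $\ell:\mathcal{W}\times\mathcal{Z}\to[0,1]$ be a loss that is $L$-Lipschitz in the weights, i.e. $|\ell(w,z)-\ell(w',z)|\le L\|w-w'\|$ for all $w,w',z$ (with $\ell$ extended to all of $\mathbb{R}^K$ with the same properties so that noisy weights can be evaluated). If $\mathcal{A}$ has $\epsilon$-weight stability relative to a positive definite matrix $\Sigma$, then \[ \mathrm{gen}(\mathcal{A})\le\sqrt{4c_n\,\epsilon\, L\sqrt{\mathrm{tr}(\Sigma)}},\qquad c_n=\frac{n}{n-1}. \]
   Context: $\mathcal{A}$ has $\epsilon$-weight stability relative to $\Sigma$ if for all $z^{n-1},\hat z^{n-1}\in\mathcal{Z}^{n-1}$ differing in at most one entry, $a=\mathcal{A}(z^{n-1})-\mathcal{A}(\hat z^{n-1})$ satisfies $a^T\Sigma^{-1}a\le\epsilon^2$. True loss $\mathcal{L}(w)=\mathbb{E}_{Z'\sim\mathcal{P}}\ell(w,Z')$, empirical loss $\widehat{\mathcal{L}}(w,z^m)=\frac1m\sum_i\ell(w,z_i)$, and $\mathrm{gen}(\mathcal{A})=|\mathbb{E}_{Z^{n-1}\sim\mathcal{P}^{n-1}}[\mathcal{L}(\mathcal{A}(Z^{n-1}))-\widehat{\mathcal{L}}(\mathcal{A}(Z^{n-1}),Z^{n-1})]|$. *)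

theory Defs
  imports "HOL-Probability.Probability"
begin

definition pos_def_mat :: "real^'k^'k \<Rightarrow> bool" where
  "pos_def_mat S \<longleftrightarrow> transpose S = S \<and> (\<forall>x. x \<noteq> 0 \<longrightarrow> x \<bullet> (S *v x) > 0)"

text \<open>Samples z^(m) are represented as extensional functions on {..<m} with values in space M.\<close>
definition weight_stable ::
  "'z measure \<Rightarrow> nat \<Rightarrow> ((nat \<Rightarrow> 'z) \<Rightarrow> real^'k) \<Rightarrow> real^'k^'k \<Rightarrow> real \<Rightarrow> bool" where
  "weight_stable M m A S eps \<longleftrightarrow>
     (\<forall>z \<in> PiE {..<m} (\<lambda>_. space M). \<forall>z' \<in> PiE {..<m} (\<lambda>_. space M).
        (\<exists>i<m. \<forall>j<m. j \<noteq> i \<longrightarrow> z j = z' j) \<longrightarrow>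
        (let a = A z - A z' in a \<bullet> (matrix_inv S *v a) \<le> eps\<^sup>2))"

definition true_loss :: "'z measure \<Rightarrow> (real^'k \<Rightarrow> 'z \<Rightarrow> real) \<Rightarrow> real^'k \<Rightarrow> real" where
  "true_loss M l w = (\<integral>z'. l w z' \<partial>M)"

definition emp_loss :: "nat \<Rightarrow> (real^'k \<Rightarrow> 'z \<Rightarrow> real) \<Rightarrow> real^'k \<Rightarrow> (nat \<Rightarrow> 'z) \<Rightarrow> real" where
  "emp_loss m l w z = (1 / real m) * (\<Sum>i<m. l w (z i))"

definition gen_err ::
  "'z measure \<Rightarrow> nat \<Rightarrow> ((nat \<Rightarrow> 'z) \<Rightarrow> real^'k) \<Rightarrow> (real^'k \<Rightarrow> 'z \<Rightarrow> real) \<Rightarrow> real" where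
  "gen_err M m A l =
     \<bar>\<integral>z. (true_loss M l (A z) - emp_loss m l (A z) z) \<partial>(PiM {..<m} (\<lambda>_. M))\<bar>"

end

theory Submission
  imports Defs
begin

text \<open>For a positive definite \<open>\<Sigma>\<close> one has \<open>\<parallel>a\<parallel>\<^sup>2 \<le> (a\<^sup>T \<Sigma>\<^sup>-\<^sup>1 a) tr \<Sigma>\<close>, so \<open>\<epsilon>\<close>-weight stability
  moves the weights by at most \<open>\<epsilon> \<surd>tr \<Sigma>\<close> when one sample is replaced, and the Lipschitz loss
  then changes by at most \<open>c = L \<epsilon> \<surd>tr \<Sigma>\<close> at every point: the algorithm is uniformly stable.
  Resampling the \<open>i\<close>-th training point by a fresh copy turns the generalization gap into an
  average of such loss differences, so \<open>gen(\<A>) \<le> c\<close>. Since the loss takes values in \<open>[0,1]\<close>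
  also \<open>gen(\<A>) \<le> 1\<close>, hence \<open>gen(\<A>) \<le> \<surd>c\<close>, which is at most the claimed bound.\<close>

lemma pos_def_mat_symmetric:
  fixes S :: "real^'k^'k"
  assumes "pos_def_mat S"
  shows "u \<bullet> (S *v v) = v \<bullet> (S *v u)"
proof -
  have "u \<bullet> (S *v v) = (u v* S) \<bullet> v"
    by (simp add: dot_lmul_matrix)
  also have "u v* S = transpose S *v u"
    by simp
  also have "\<dots> = S *v u"
    using assms by (simp add: pos_def_mat_def)
  finally show ?thesis
    by (simp add: inner_commute)
qed

lemma pos_def_mat_nonneg:
  fixes S :: "real^'k^'k"
  assumes "pos_def_mat S"
  shows "0 \<le> x \<bullet> (S *v x)"
  using assms unfolding pos_def_mat_def by (cases "x = 0") (auto intro: less_imp_le)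

lemma inner_axis_matrix_vector_axis: "axis i 1 \<bullet> (S *v axis i 1) = (S $ i $ i :: real)"
  by (simp only: inner_axis') (simp add: matrix_vector_mult_def axis_def if_distrib cong: if_cong)

lemma pos_def_mat_trace_nonneg:
  fixes S :: "real^'k^'k"
  assumes "pos_def_mat S"
  shows "0 \<le> trace S"
  unfolding trace_def
  by (rule sum_nonneg) (metis pos_def_mat_nonneg[OF assms] inner_axis_matrix_vector_axis)

lemma pos_def_mat_Cauchy_Schwarz:
  fixes S :: "real^'k^'k"
  assumes "pos_def_mat S"
  shows "(x \<bullet> (S *v y))\<^sup>2 \<le> (x \<bullet> (S *v x)) * (y \<bullet> (S *v y))"
proof (cases "y = 0")
  case True
  then show ?thesis by simp
next
  case False
  then have q: "y \<bullet> (S *v y) > 0"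
    using assms by (simp add: pos_def_mat_def)
  define t where "t = (x \<bullet> (S *v y)) / (y \<bullet> (S *v y))"
  have "0 \<le> (x - t *\<^sub>R y) \<bullet> (S *v (x - t *\<^sub>R y))"
    by (rule pos_def_mat_nonneg[OF assms])
  also have "\<dots> = x \<bullet> (S *v x) - 2 * t * (x \<bullet> (S *v y)) + t\<^sup>2 * (y \<bullet> (S *v y))"
    using pos_def_mat_symmetric[OF assms, of y x]
    by (simp add: matrix_vector_mult_diff_distrib matrix_vector_mult_scaleR inner_diff_left
        inner_diff_right power2_eq_square algebra_simps)
  also have "\<dots> = x \<bullet> (S *v x) - (x \<bullet> (S *v y))\<^sup>2 / (y \<bullet> (S *v y))"
    using q by (simp add: t_def field_simps power2_eq_square)
  finally show ?thesis
    using q by (simp add: field_simps)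
qed

lemma pos_def_mat_right_inverse:
  fixes S :: "real^'k^'k"
  assumes "pos_def_mat S"
  shows "S ** matrix_inv S = mat 1"
proof -
  have "\<forall>x. S *v x = 0 \<longrightarrow> x = 0"
    using assms unfolding pos_def_mat_def by (metis inner_zero_right less_irrefl)
  then have "invertible S"
    using matrix_left_invertible_ker invertible_left_inverse by blast
  then show ?thesis
    unfolding matrix_inv_def invertible_def by (metis (mono_tags, lifting) someI_ex)
qed

text \<open>Writing \<open>a = \<Sigma> b\<close>, each coordinate \<open>a\<^sub>i = e\<^sub>i\<^sup>T \<Sigma> b\<close> is bounded by Cauchy--Schwarz for the
  inner product induced by \<open>\<Sigma>\<close>: \<open>a\<^sub>i\<^sup>2 \<le> \<Sigma>\<^sub>i\<^sub>i (b\<^sup>T \<Sigma> b)\<close>, and \<open>b\<^sup>T \<Sigma> b = a\<^sup>T \<Sigma>\<^sup>-\<^sup>1 a\<close>.\<close>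

lemma norm_squared_le_inverse_form_trace:
  fixes S :: "real^'k^'k"
  assumes "pos_def_mat S"
  shows "(norm a)\<^sup>2 \<le> (a \<bullet> (matrix_inv S *v a)) * trace S"
proof -
  define b where "b = matrix_inv S *v a"
  have a: "a = S *v b"
    unfolding b_def by (simp add: matrix_vector_mul_assoc pos_def_mat_right_inverse[OF assms])
  have "(norm a)\<^sup>2 = (\<Sum>i\<in>UNIV. (a$i)\<^sup>2)"
    unfolding power2_norm_eq_inner inner_vec_def by (simp add: power2_eq_square)
  also have "\<dots> \<le> (\<Sum>i\<in>UNIV. S$i$i * (b \<bullet> (S *v b)))"
  proof (rule sum_mono)
    fix i
    have "a$i = axis i 1 \<bullet> (S *v b)"
      by (simp add: a inner_axis')
    then show "(a$i)\<^sup>2 \<le> S$i$i * (b \<bullet> (S *v b))"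
      using pos_def_mat_Cauchy_Schwarz[OF assms, of "axis i 1" b]
      by (simp add: inner_axis_matrix_vector_axis)
  qed
  also have "\<dots> = (a \<bullet> (matrix_inv S *v a)) * trace S"
  proof -
    have "a \<bullet> (matrix_inv S *v a) = b \<bullet> (S *v b)"
      unfolding b_def[symmetric] by (simp add: a inner_commute)
    then show ?thesis
      by (simp add: trace_def sum_distrib_left mult.commute)
  qed
  finally show ?thesis .
qed

lemma le_sqrt_if_le_one_and_le:
  fixes x c :: real
  assumes "0 \<le> x" and "x \<le> 1" and "x \<le> c"
  shows "x \<le> sqrt c"
proof -
  have "x\<^sup>2 \<le> 1 * c"
    unfolding power2_eq_square using assms by (intro mult_mono) auto
  then show ?thesis
    using assms(1) real_le_rsqrt by simp
qed

lemma (in prob_space) abs_integral_le_const: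
  fixes f :: "'a \<Rightarrow> real"
  assumes bound: "\<And>x. x \<in> space M \<Longrightarrow> \<bar>f x\<bar> \<le> c"
  shows "\<bar>\<integral>x. f x \<partial>M\<bar> \<le> c"
proof -
  obtain x0 where "x0 \<in> space M"
    using not_empty by blast
  then have c: "0 \<le> c"
    using bound[of x0] by linarith
  have "(\<integral>\<^sup>+x. ennreal \<bar>f x\<bar> \<partial>M) \<le> (\<integral>\<^sup>+x. ennreal c \<partial>M)"
    by (rule nn_integral_mono) (simp add: bound ennreal_leI)
  also have "\<dots> = ennreal c"
    by (simp add: emeasure_space_1)
  finally have "(\<integral>x. \<bar>f x\<bar> \<partial>M) \<le> c"
    by (rule integral_real_bounded[OF c])
  then show ?thesis
    using integral_abs_bound[of M f] by linarith
qed

lemma (in prob_space) integrable_bounded: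
  fixes f :: "'a \<Rightarrow> real"
  assumes "f \<in> borel_measurable M" and "\<And>x. x \<in> space M \<Longrightarrow> \<bar>f x\<bar> \<le> B"
  shows "integrable M f"
  by (rule integrable_const_bound[where B=B]) (use assms in \<open>auto intro!: AE_I2\<close>)

text \<open>The resampling identity: with \<open>y'\<close> an independent copy of \<open>y\<close>,
  \<open>\<integral>y. (\<integral>y'. K y y') - K y y\<close> equals the expectation of \<open>K y y' - K y' y'\<close> over the pair.\<close>

lemma (in prob_space) abs_integral_resample_le:
  fixes K :: "'a \<Rightarrow> 'a \<Rightarrow> real"
  assumes K[measurable]: "case_prod K \<in> borel_measurable (M \<Otimes>\<^sub>M M)"
    and bound: "\<And>y y'. y \<in> space M \<Longrightarrow> y' \<in> space M \<Longrightarrow> \<bar>K y y'\<bar> \<le> B"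
    and stable: "\<And>y y'. y \<in> space M \<Longrightarrow> y' \<in> space M \<Longrightarrow> \<bar>K y y' - K y' y'\<bar> \<le> c"
  shows "\<bar>\<integral>y. ((\<integral>y'. K y y' \<partial>M) - K y y) \<partial>M\<bar> \<le> c"
proof -
  interpret pair: pair_prob_space M M ..
  have diag[measurable]: "(\<lambda>y. K y y) \<in> borel_measurable M"
    using measurable_compose[OF measurable_Pair[OF measurable_ident_sets measurable_ident_sets] K]
    by simp
  have int_diag: "integrable M (\<lambda>y. K y y)"
    by (rule integrable_bounded[where B=B]) (auto simp: bound)
  have int_section: "integrable M (K y)" if "y \<in> space M" for y
    by (rule integrable_bounded[where B=B]) (use that in \<open>auto simp: bound\<close>)
  have int_marginal: "integrable M (\<lambda>y. \<integral>y'. K y y' \<partial>M)"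
    by (rule integrable_bounded[where B=B]) (auto intro!: abs_integral_le_const simp: bound)
  have "\<bar>K y y' - K y' y'\<bar> \<le> 2 * B" if "y \<in> space M" and "y' \<in> space M" for y y'
    using bound[OF that] bound[OF that(2) that(2)] by linarith
  then have int_pair: "integrable (M \<Otimes>\<^sub>M M) (\<lambda>(y, y'). K y y' - K y' y')"
    by (intro pair.P.integrable_bounded[where B="2 * B"]) (auto simp: space_pair_measure)
  have "(\<integral>y. ((\<integral>y'. K y y' \<partial>M) - K y y) \<partial>M) = (\<integral>y. (\<integral>y'. K y y' \<partial>M) \<partial>M) - (\<integral>y. K y y \<partial>M)"
    by (rule Bochner_Integration.integral_diff[OF int_marginal int_diag])
  also have "\<dots> = (\<integral>y. ((\<integral>y'. K y y' \<partial>M) - (\<integral>y'. K y' y' \<partial>M)) \<partial>M)"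
    using Bochner_Integration.integral_diff[OF int_marginal integrable_const] by (simp add: prob_space)
  also have "\<dots> = (\<integral>y. (\<integral>y'. (K y y' - K y' y') \<partial>M) \<partial>M)"
    using Bochner_Integration.integral_diff[OF int_section int_diag]
    by (intro Bochner_Integration.integral_cong) auto
  also have "\<dots> = (\<integral>p. (case p of (y, y') \<Rightarrow> K y y' - K y' y') \<partial>(M \<Otimes>\<^sub>M M))"
    using pair.integral_fst'[OF int_pair] by simp
  finally have resample: "(\<integral>y. ((\<integral>y'. K y y' \<partial>M) - K y y) \<partial>M) =
      (\<integral>p. (case p of (y, y') \<Rightarrow> K y y' - K y' y') \<partial>(M \<Otimes>\<^sub>M M))" .
  have "\<bar>\<integral>p. (case p of (y, y') \<Rightarrow> K y y' - K y' y') \<partial>(M \<Otimes>\<^sub>M M)\<bar> \<le> c"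
    by (rule pair.P.abs_integral_le_const) (auto simp: space_pair_measure stable)
  then show ?thesis
    unfolding resample .
qed

definition uniformly_stable ::
  "'z measure \<Rightarrow> nat \<Rightarrow> ((nat \<Rightarrow> 'z) \<Rightarrow> 'w) \<Rightarrow> ('w \<Rightarrow> 'z \<Rightarrow> real) \<Rightarrow> real \<Rightarrow> bool" where
  "uniformly_stable M m A l c \<longleftrightarrow>
     (\<forall>z \<in> PiE {..<m} (\<lambda>_. space M). \<forall>z' \<in> PiE {..<m} (\<lambda>_. space M).
        (\<exists>i<m. \<forall>j<m. j \<noteq> i \<longrightarrow> z j = z' j) \<longrightarrow>
        (\<forall>y \<in> space M. \<bar>l (A z) y - l (A z') y\<bar> \<le> c))"

lemma measurable_loss_comp:
  assumes "(\<lambda>(w, z). l w z) \<in> borel_measurable (borel \<Otimes>\<^sub>M M)"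
    and "f \<in> borel_measurable N" and "g \<in> measurable N M"
  shows "(\<lambda>x. l (f x) (g x)) \<in> borel_measurable N"
  using measurable_compose[OF measurable_Pair[OF assms(2,3)] assms(1)] by simp

lemma integrable_resample_gap:
  fixes A :: "(nat \<Rightarrow> 'z) \<Rightarrow> 'w::topological_space" and l :: "'w \<Rightarrow> 'z \<Rightarrow> real"
  assumes M: "prob_space M" and i: "i < m"
    and A[measurable]: "A \<in> borel_measurable (PiM {..<m} (\<lambda>_. M))"
    and l: "(\<lambda>(w, z). l w z) \<in> borel_measurable (borel \<Otimes>\<^sub>M M)"
    and bound: "\<And>w z. z \<in> space M \<Longrightarrow> \<bar>l w z\<bar> \<le> B"
  shows "integrable (PiM {..<m} (\<lambda>_. M)) (\<lambda>z. (\<integral>y. l (A z) y \<partial>M) - l (A z) (z i))"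
proof (rule prob_space.integrable_bounded[where B="2 * B"])
  interpret prob_space M by fact
  show "prob_space (PiM {..<m} (\<lambda>_. M))"
    by (rule prob_space_PiM) (simp add: M)
  have [measurable]: "case_prod (\<lambda>z y. l (A z) y) \<in> borel_measurable (PiM {..<m} (\<lambda>_. M) \<Otimes>\<^sub>M M)"
    unfolding split_beta' by (rule measurable_loss_comp[OF l]) auto
  have [measurable]: "(\<lambda>z. l (A z) (z i)) \<in> borel_measurable (PiM {..<m} (\<lambda>_. M))"
    by (rule measurable_loss_comp[OF l]) (use i in auto)
  show "(\<lambda>z. (\<integral>y. l (A z) y \<partial>M) - l (A z) (z i)) \<in> borel_measurable (PiM {..<m} (\<lambda>_. M))"
    by measurable
  fix z assume "z \<in> space (PiM {..<m} (\<lambda>_. M))"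
  then have "\<bar>l (A z) (z i)\<bar> \<le> B"
    using i by (auto intro: bound simp: space_PiM)
  moreover have "\<bar>\<integral>y. l (A z) y \<partial>M\<bar> \<le> B"
    by (rule abs_integral_le_const[OF bound])
  ultimately show "\<bar>(\<integral>y. l (A z) y \<partial>M) - l (A z) (z i)\<bar> \<le> 2 * B"
    by linarith
qed

lemma uniformly_stable_resample_coordinate:
  fixes A :: "(nat \<Rightarrow> 'z) \<Rightarrow> 'w::topological_space" and l :: "'w \<Rightarrow> 'z \<Rightarrow> real"
  assumes M: "prob_space M" and i: "i < m"
    and A[measurable]: "A \<in> borel_measurable (PiM {..<m} (\<lambda>_. M))"
    and l: "(\<lambda>(w, z). l w z) \<in> borel_measurable (borel \<Otimes>\<^sub>M M)"
    and bound: "\<And>w z. z \<in> space M \<Longrightarrow> \<bar>l w z\<bar> \<le> B"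
    and stable: "uniformly_stable M m A l c"
  shows "\<bar>\<integral>z. ((\<integral>y. l (A z) y \<partial>M) - l (A z) (z i)) \<partial>PiM {..<m} (\<lambda>_. M)\<bar> \<le> c"
proof -
  interpret prob_space M by fact
  interpret product_sigma_finite "\<lambda>_. M"
    by (simp add: product_sigma_finite_def sigma_finite_measure_axioms)
  define J where "J = {..<m} - {i}"
  have ins: "insert i J = {..<m}" and iJ: "i \<notin> J" and fin: "finite J"
    using i by (auto simp: J_def)
  define g where "g z = (\<integral>y. l (A z) y \<partial>M) - l (A z) (z i)" for z
  have "integrable (PiM {..<m} (\<lambda>_. M)) g"
    unfolding g_def by (rule integrable_resample_gap[OF M i A l bound])
  then have "(\<integral>z. g z \<partial>PiM {..<m} (\<lambda>_. M)) = (\<integral>x. (\<integral>y. g (x(i := y)) \<partial>M) \<partial>PiM J (\<lambda>_. M))"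
    using product_integral_insert[OF fin iJ, of g] by (simp add: ins)
  also have "\<bar>\<dots>\<bar> \<le> c"
  proof (rule prob_space.abs_integral_le_const)
    show "prob_space (PiM J (\<lambda>_. M))"
      by (rule prob_space_PiM) (simp add: M)
    fix x assume x: "x \<in> space (PiM J (\<lambda>_. M))"
    have upd: "(\<lambda>y. x(i := y)) \<in> measurable M (PiM {..<m} (\<lambda>_. M))"
      using measurable_component_update[OF x iJ] by (simp add: ins)
    have upd_space: "x(i := y) \<in> PiE {..<m} (\<lambda>_. space M)" if "y \<in> space M" for y
      using measurable_space[OF upd that] by (simp add: space_PiM)
    have "\<bar>\<integral>y. ((\<integral>y'. l (A (x(i := y))) y' \<partial>M) - l (A (x(i := y))) y) \<partial>M\<bar> \<le> c"
    proof (rule abs_integral_resample_le[where B=B])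
      show "(\<lambda>(y, y'). l (A (x(i := y))) y') \<in> borel_measurable (M \<Otimes>\<^sub>M M)"
        unfolding split_beta'
        by (rule measurable_loss_comp[OF l])
          (auto intro: measurable_compose[OF measurable_fst measurable_compose[OF upd A]])
      fix y y' assume y: "y \<in> space M" and y': "y' \<in> space M"
      show "\<bar>l (A (x(i := y))) y'\<bar> \<le> B"
        using y' by (rule bound)
      show "\<bar>l (A (x(i := y))) y' - l (A (x(i := y'))) y'\<bar> \<le> c"
      proof -
        have "\<exists>j<m. \<forall>k<m. k \<noteq> j \<longrightarrow> (x(i := y)) k = (x(i := y')) k"
          using i by auto
        then have "\<forall>y''\<in>space M. \<bar>l (A (x(i := y))) y'' - l (A (x(i := y'))) y''\<bar> \<le> c"
          using stable upd_space[OF y] upd_space[OF y'] unfolding uniformly_stable_def by blast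
        then show ?thesis
          using y' by blast
      qed
    qed
    then show "\<bar>\<integral>y. g (x(i := y)) \<partial>M\<bar> \<le> c"
      by (simp add: g_def)
  qed
  finally show ?thesis
    by (simp add: g_def)
qed

lemma gen_err_le_uniform_stability:
  fixes A :: "(nat \<Rightarrow> 'z) \<Rightarrow> real^'k" and l :: "real^'k \<Rightarrow> 'z \<Rightarrow> real"
  assumes M: "prob_space M" and m: "0 < m"
    and A: "A \<in> borel_measurable (PiM {..<m} (\<lambda>_. M))"
    and l: "(\<lambda>(w, z). l w z) \<in> borel_measurable (borel \<Otimes>\<^sub>M M)"
    and bound: "\<And>w z. z \<in> space M \<Longrightarrow> \<bar>l w z\<bar> \<le> B"
    and stable: "uniformly_stable M m A l c"
  shows "gen_err M m A l \<le> c"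
proof -
  define gap where "gap i z = (\<integral>y. l (A z) y \<partial>M) - l (A z) (z i)" for i z
  have "true_loss M l (A z) - emp_loss m l (A z) z = (\<Sum>i<m. gap i z) / real m" for z
    using m by (simp add: true_loss_def emp_loss_def gap_def sum_subtractf field_simps)
  then have "gen_err M m A l = \<bar>\<Sum>i<m. \<integral>z. gap i z \<partial>PiM {..<m} (\<lambda>_. M)\<bar> / real m"
    unfolding gen_err_def gap_def
    by (simp add: Bochner_Integration.integral_sum integrable_resample_gap[OF M _ A l bound])
  also have "\<dots> \<le> (\<Sum>i<m. c) / real m"
    by (intro divide_right_mono order_trans[OF sum_abs sum_mono])
      (auto simp: gap_def intro: uniformly_stable_resample_coordinate[OF M _ A l bound stable])
  also have "\<dots> = c"
    using m by simp
  finally show ?thesis .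
qed

lemma weight_stable_imp_uniformly_stable:
  fixes A :: "(nat \<Rightarrow> 'z) \<Rightarrow> real^'k" and l :: "real^'k \<Rightarrow> 'z \<Rightarrow> real"
  assumes S: "pos_def_mat S" and eps: "0 \<le> eps" and stable: "weight_stable M m A S eps"
    and lipschitz: "\<And>w w' z. z \<in> space M \<Longrightarrow> \<bar>l w z - l w' z\<bar> \<le> L * norm (w - w')"
  shows "uniformly_stable M m A l (L * eps * sqrt (trace S))"
  unfolding uniformly_stable_def
proof (intro ballI impI)
  fix z z' y
  assume z: "z \<in> PiE {..<m} (\<lambda>_. space M)" and z': "z' \<in> PiE {..<m} (\<lambda>_. space M)"
    and neighbours: "\<exists>i<m. \<forall>j<m. j \<noteq> i \<longrightarrow> z j = z' j" and y: "y \<in> space M"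
  define a where "a = A z - A z'"
  have "0 \<le> L * norm (axis i (1::real) - 0)" for i :: 'k
    using lipschitz[OF y, of "axis i 1" 0] by linarith
  then have L: "0 \<le> L"
    by (simp add: norm_axis_1)
  have "a \<bullet> (matrix_inv S *v a) \<le> eps\<^sup>2"
    using stable z z' neighbours unfolding weight_stable_def a_def Let_def by blast
  then have "(norm a)\<^sup>2 \<le> eps\<^sup>2 * trace S"
    using norm_squared_le_inverse_form_trace[OF S, of a] pos_def_mat_trace_nonneg[OF S]
    by (meson mult_right_mono order_trans)
  then have "norm a \<le> eps * sqrt (trace S)"
    using real_sqrt_le_mono eps by (fastforce simp: real_sqrt_mult)
  then have "L * norm a \<le> L * eps * sqrt (trace S)"
    using L by (simp add: mult.assoc mult_left_mono)
  then show "\<bar>l (A z) y - l (A z') y\<bar> \<le> L * eps * sqrt (trace S)"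
    using lipschitz[OF y, of "A z" "A z'"] unfolding a_def by linarith
qed

theorem theorem4:
  fixes M :: "'z measure" and n :: nat
    and A :: "(nat \<Rightarrow> 'z) \<Rightarrow> real^'k"
    and l :: "real^'k \<Rightarrow> 'z \<Rightarrow> real"
    and L eps :: real and S :: "real^'k^'k"
  assumes "n \<ge> 2"
    and "prob_space M"
    and "A \<in> borel_measurable (PiM {..<n-1} (\<lambda>_. M))"
    and "(\<lambda>(w, z). l w z) \<in> borel_measurable (borel \<Otimes>\<^sub>M M)"
    and "\<And>w z. z \<in> space M \<Longrightarrow> 0 \<le> l w z \<and> l w z \<le> 1"
    and "\<And>w w' z. z \<in> space M \<Longrightarrow> \<bar>l w z - l w' z\<bar> \<le> L * norm (w - w')"
    and "pos_def_mat S"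
    and "eps \<ge> 0"
    and "weight_stable M (n-1) A S eps"
  shows "gen_err M (n-1) A l \<le> sqrt (4 * (real n / (real n - 1)) * eps * L * sqrt (trace S))"
proof -
  define c where "c = L * eps * sqrt (trace S)"
  have m: "0 < n - 1"
    using assms(1) by simp
  have bound: "\<And>w z. z \<in> space M \<Longrightarrow> \<bar>l w z\<bar> \<le> 1"
    using assms(5) by (simp add: abs_le_iff)
  have "uniformly_stable M (n-1) A l c"
    unfolding c_def by (rule weight_stable_imp_uniformly_stable[OF assms(7,8,9,6)])
  have "\<bar>l w y - l w' y\<bar> \<le> 1" if "y \<in> space M" for w w' y
    using assms(5)[OF that, of w] assms(5)[OF that, of w'] by linarith
  then have "uniformly_stable M (n-1) A l 1"
    by (simp add: uniformly_stable_def)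
  note gen_err_le = gen_err_le_uniform_stability[OF assms(2) m assms(3,4)]
  have "gen_err M (n-1) A l \<le> c"
    using bound \<open>uniformly_stable M (n-1) A l c\<close> by (rule gen_err_le)
  moreover have "gen_err M (n-1) A l \<le> 1"
    using bound \<open>uniformly_stable M (n-1) A l 1\<close> by (rule gen_err_le)
  moreover have "0 \<le> gen_err M (n-1) A l"
    by (simp add: gen_err_def)
  ultimately have gen_le: "gen_err M (n-1) A l \<le> sqrt c" and c: "0 \<le> c"
    by (auto intro: le_sqrt_if_le_one_and_le)
  have "1 \<le> 4 * (real n / (real n - 1))"
    using assms(1) by (simp add: field_simps)
  then have "c \<le> 4 * (real n / (real n - 1)) * eps * L * sqrt (trace S)"
    using mult_right_mono[OF _ c] by (fastforce simp: c_def ac_simps)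
  then show ?thesis
    using gen_le real_sqrt_le_mono order_trans by blast
qed

end
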